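(* Let $L$ be a C-loop with nucleus $N$. Then $N$ is a normal subloop (indeed a normal subgroup) of $L$.
   Context: A loop is a set with a binary operation and neutral element $e$ in which left and right division are uniquely solvable. A C-loop is a loop satisfying $x(y(yz))=((xy)y)z$ for all $x,y,z$. The left nucleus is $N_\lambda=\{a: a(yz)=(ay)z\ \forall y,z\}$, the middle nucleus $N_\mu=\{a: y(az)=(ya)z\ \forall y,z\}$, the right nucleus $N_\rho=\{a: y(za)=(yz)a\ \forall y,z\}$, and the nucleus is $N=N_\lambda\cap N_\mu\cap N_\rho$. A subloop $K$ of $L$ is normal if $xK=Kx$, $x(yK)=(xy)K$ and $x(Ky)=(xK)y$ for all $x,y\in L$. *)

theory Defs
  imports Main
begin

definition is_loop :: "'a set \<Rightarrow> ('a \<Rightarrow> 'a \<Rightarrow> 'a) \<Rightarrow> 'a \<Rightarrow> bool" where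
  "is_loop L m e \<longleftrightarrow>
     e \<in> L \<and> (\<forall>x\<in>L. \<forall>y\<in>L. m x y \<in> L) \<and>
     (\<forall>x\<in>L. m e x = x \<and> m x e = x) \<and>
     (\<forall>a\<in>L. \<forall>b\<in>L. \<exists>!x. x \<in> L \<and> m a x = b) \<and>
     (\<forall>a\<in>L. \<forall>b\<in>L. \<exists>!y. y \<in> L \<and> m y a = b)"

definition is_C_loop :: "'a set \<Rightarrow> ('a \<Rightarrow> 'a \<Rightarrow> 'a) \<Rightarrow> 'a \<Rightarrow> bool" where
  "is_C_loop L m e \<longleftrightarrow> is_loop L m e \<and>
     (\<forall>x\<in>L. \<forall>y\<in>L. \<forall>z\<in>L. m x (m y (m y z)) = m (m (m x y) y) z)"

definition left_nucleus :: "'a set \<Rightarrow> ('a \<Rightarrow> 'a \<Rightarrow> 'a) \<Rightarrow> 'a set" where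
  "left_nucleus L m = {a \<in> L. \<forall>y\<in>L. \<forall>z\<in>L. m a (m y z) = m (m a y) z}"

definition middle_nucleus :: "'a set \<Rightarrow> ('a \<Rightarrow> 'a \<Rightarrow> 'a) \<Rightarrow> 'a set" where
  "middle_nucleus L m = {a \<in> L. \<forall>y\<in>L. \<forall>z\<in>L. m y (m a z) = m (m y a) z}"

definition right_nucleus :: "'a set \<Rightarrow> ('a \<Rightarrow> 'a \<Rightarrow> 'a) \<Rightarrow> 'a set" where
  "right_nucleus L m = {a \<in> L. \<forall>y\<in>L. \<forall>z\<in>L. m y (m z a) = m (m y z) a}"

definition nucleus :: "'a set \<Rightarrow> ('a \<Rightarrow> 'a \<Rightarrow> 'a) \<Rightarrow> 'a set" where
  "nucleus L m = left_nucleus L m \<inter> middle_nucleus L m \<inter> right_nucleus L m"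

definition is_subloop :: "'a set \<Rightarrow> 'a set \<Rightarrow> ('a \<Rightarrow> 'a \<Rightarrow> 'a) \<Rightarrow> 'a \<Rightarrow> bool" where
  "is_subloop K L m e \<longleftrightarrow> K \<subseteq> L \<and> e \<in> K \<and>
     (\<forall>a\<in>K. \<forall>b\<in>K. m a b \<in> K) \<and>
     (\<forall>a\<in>K. \<forall>b\<in>K. \<forall>x\<in>L. m a x = b \<longrightarrow> x \<in> K) \<and>
     (\<forall>a\<in>K. \<forall>b\<in>K. \<forall>y\<in>L. m y a = b \<longrightarrow> y \<in> K)"

definition is_normal_subloop :: "'a set \<Rightarrow> 'a set \<Rightarrow> ('a \<Rightarrow> 'a \<Rightarrow> 'a) \<Rightarrow> 'a \<Rightarrow> bool" where
  "is_normal_subloop K L m e \<longleftrightarrow> is_subloop K L m e \<and>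
     (\<forall>x\<in>L. (\<lambda>k. m x k) ` K = (\<lambda>k. m k x) ` K) \<and>
     (\<forall>x\<in>L. \<forall>y\<in>L. (\<lambda>k. m x (m y k)) ` K = (\<lambda>k. m (m x y) k) ` K) \<and>
     (\<forall>x\<in>L. \<forall>y\<in>L. (\<lambda>k. m x (m k y)) ` K = (\<lambda>k. m (m x k) y) ` K)"

end

theory Submission
  imports Defs
begin

text \<open>Putting \<open>x = e\<close> or \<open>z = e\<close> in the C-law makes C-loops left and right alternative,
  and then the C-law itself says that every square \<open>y y\<close> lies in the middle nucleus.
  The C-law also yields the left and right inverse properties, which make the middle nucleus closed
  under inverses and equal to the whole nucleus \<open>N\<close>; so \<open>N\<close> is a subgroup containing all squares.
  Normality then comes from writing \<open>x = x\<^sup>2 x\<^sup>-\<^sup>1\<close> and \<open>x\<^sup>-\<^sup>1 k = (w\<^sup>2)\<^sup>-\<^sup>1 w\<close> with \<open>w = k\<^sup>-\<^sup>1 x\<close>: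
  this turns \<open>x k\<close> into \<open>(x\<^sup>2 (w\<^sup>2)\<^sup>-\<^sup>1 k\<^sup>-\<^sup>1) x\<close>. Every notion involved is invariant under passing
  to the opposite loop, which halves the work.\<close>

lemma is_loop_opposite: "is_loop L m e \<Longrightarrow> is_loop L (\<lambda>x y. m y x) e"
  unfolding is_loop_def by auto

lemma is_C_loop_opposite: "is_C_loop L m e \<Longrightarrow> is_C_loop L (\<lambda>x y. m y x) e"
  unfolding is_C_loop_def by (auto intro: is_loop_opposite)

lemma left_nucleus_opposite: "left_nucleus L (\<lambda>x y. m y x) = right_nucleus L m"
  unfolding left_nucleus_def right_nucleus_def by metis

lemma middle_nucleus_opposite: "middle_nucleus L (\<lambda>x y. m y x) = middle_nucleus L m"
  unfolding middle_nucleus_def by metis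

lemma right_nucleus_opposite: "right_nucleus L (\<lambda>x y. m y x) = left_nucleus L m"
  using left_nucleus_opposite[of L "\<lambda>x y. m y x"] by simp

text \<open>The \<open>*_opposite\<close> equations loop as unrestricted rewrite rules (\<open>m\<close> matches
  \<open>\<lambda>x y. ?m y x\<close>), so they are only ever used instantiated.\<close>

lemma nucleus_opposite: "nucleus L (\<lambda>x y. m y x) = nucleus L m"
  unfolding nucleus_def left_nucleus_opposite[of L m] middle_nucleus_opposite[of L m]
    right_nucleus_opposite[of L m]
  by blast

locale C_loop =
  fixes L :: "'a set" and m :: "'a \<Rightarrow> 'a \<Rightarrow> 'a" (infixl "\<cdot>" 70) and e :: 'a
  assumes C_loop: "is_C_loop L m e"
begin

lemma unit_closed: "e \<in> L"
  using C_loop by (simp add: is_C_loop_def is_loop_def)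

lemma mult_closed [simp]: "x \<in> L \<Longrightarrow> y \<in> L \<Longrightarrow> x \<cdot> y \<in> L"
  using C_loop by (simp add: is_C_loop_def is_loop_def)

lemma left_unit [simp]: "x \<in> L \<Longrightarrow> e \<cdot> x = x"
  using C_loop by (simp add: is_C_loop_def is_loop_def)

lemma right_unit [simp]: "x \<in> L \<Longrightarrow> x \<cdot> e = x"
  using C_loop by (simp add: is_C_loop_def is_loop_def)

lemma left_cancel: "\<lbrakk>a \<in> L; x \<in> L; y \<in> L; a \<cdot> x = a \<cdot> y\<rbrakk> \<Longrightarrow> x = y"
  using C_loop unfolding is_C_loop_def is_loop_def by (metis mult_closed)

lemma left_division: "a \<in> L \<Longrightarrow> b \<in> L \<Longrightarrow> \<exists>x\<in>L. a \<cdot> x = b"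
  using C_loop unfolding is_C_loop_def is_loop_def by metis

lemma right_division: "a \<in> L \<Longrightarrow> b \<in> L \<Longrightarrow> \<exists>y\<in>L. y \<cdot> a = b"
  using C_loop unfolding is_C_loop_def is_loop_def by metis

lemma C_law: "x \<in> L \<Longrightarrow> y \<in> L \<Longrightarrow> z \<in> L \<Longrightarrow> x \<cdot> (y \<cdot> (y \<cdot> z)) = ((x \<cdot> y) \<cdot> y) \<cdot> z"
  using C_loop unfolding is_C_loop_def by blast

lemma left_alternative: "y \<in> L \<Longrightarrow> z \<in> L \<Longrightarrow> y \<cdot> (y \<cdot> z) = (y \<cdot> y) \<cdot> z"
  using C_law[of e y z] unit_closed by simp

lemma right_alternative: "x \<in> L \<Longrightarrow> y \<in> L \<Longrightarrow> x \<cdot> (y \<cdot> y) = (x \<cdot> y) \<cdot> y"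
  using C_law[of x y e] unit_closed by simp

lemma square_in_middle_nucleus: "y \<in> L \<Longrightarrow> y \<cdot> y \<in> middle_nucleus L m"
  unfolding middle_nucleus_def using C_law left_alternative right_alternative by simp

definition inv_of :: "'a \<Rightarrow> 'a" where
  "inv_of y = (SOME z. z \<in> L \<and> y \<cdot> z = e)"

lemma inv_of_closed [simp]: "y \<in> L \<Longrightarrow> inv_of y \<in> L"
  and right_inverse [simp]: "y \<in> L \<Longrightarrow> y \<cdot> inv_of y = e"
  using someI_ex[of "\<lambda>z. z \<in> L \<and> y \<cdot> z = e"] left_division[OF _ unit_closed, of y]
  by (auto simp: inv_of_def)

lemma right_inverse_property [simp]:
  assumes "u \<in> L" "y \<in> L" shows "(u \<cdot> y) \<cdot> inv_of y = u"
proof -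
  obtain x where "x \<in> L" "x \<cdot> y = u"
    using right_division assms by blast
  with C_law[of x y "inv_of y"] assms show ?thesis by simp
qed

lemma left_inverse [simp]:
  assumes "y \<in> L" shows "inv_of y \<cdot> y = e"
proof -
  obtain l where l: "l \<in> L" "l \<cdot> y = e"
    using right_division[OF assms unit_closed] by blast
  with right_inverse_property[of l y] assms have "l = inv_of y" by simp
  with l show ?thesis by simp
qed

lemma left_inverse_property [simp]:
  assumes "v \<in> L" "y \<in> L" shows "inv_of y \<cdot> (y \<cdot> v) = v"
proof -
  obtain z where "z \<in> L" "y \<cdot> z = v"
    using left_division assms by blast
  with C_law[of "inv_of y" y z] assms show ?thesis by simp
qed

lemma inv_of_inv_of [simp]: "y \<in> L \<Longrightarrow> inv_of (inv_of y) = y"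
  using left_cancel[of "inv_of y" "inv_of (inv_of y)" y] by simp

lemma inv_of_mult:
  assumes "x \<in> L" "y \<in> L" shows "inv_of (x \<cdot> y) = inv_of y \<cdot> inv_of x"
proof -
  have "inv_of (x \<cdot> y) \<cdot> x = inv_of (x \<cdot> y) \<cdot> ((x \<cdot> y) \<cdot> inv_of y)"
    using assms by simp
  also have "\<dots> = inv_of y"
    by (rule left_inverse_property) (use assms in simp_all)
  finally have eq: "inv_of (x \<cdot> y) \<cdot> x = inv_of y" .
  have "inv_of (x \<cdot> y) = (inv_of (x \<cdot> y) \<cdot> x) \<cdot> inv_of x"
    using assms by simp
  also have "\<dots> = inv_of y \<cdot> inv_of x"
    by (simp only: eq)
  finally show ?thesis .
qed

lemma inv_of_square: "w \<in> L \<Longrightarrow> inv_of w = inv_of (w \<cdot> w) \<cdot> w"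
  using left_inverse_property[of "inv_of w" "w \<cdot> w"] right_inverse_property[of w w] by simp

lemma middle_nucleus_inv_of:
  assumes a: "a \<in> middle_nucleus L m" shows "inv_of a \<in> middle_nucleus L m"
proof -
  have aL: "a \<in> L" using a by (simp add: middle_nucleus_def)
  have "u \<cdot> (inv_of a \<cdot> v) = (u \<cdot> inv_of a) \<cdot> v" if "u \<in> L" "v \<in> L" for u v
  proof -
    have "(u \<cdot> inv_of a) \<cdot> (a \<cdot> (inv_of a \<cdot> v)) = ((u \<cdot> inv_of a) \<cdot> a) \<cdot> (inv_of a \<cdot> v)"
      using a aL that by (simp add: middle_nucleus_def)
    moreover have "a \<cdot> (inv_of a \<cdot> v) = v"
      using left_inverse_property[of v "inv_of a"] that aL by simp
    moreover have "(u \<cdot> inv_of a) \<cdot> a = u"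
      using right_inverse_property[of u "inv_of a"] that aL by simp
    ultimately show ?thesis by simp
  qed
  with aL show ?thesis by (simp add: middle_nucleus_def)
qed

lemma inv_of_middle_nucleus_in_left_nucleus:
  assumes a: "a \<in> middle_nucleus L m" shows "inv_of a \<in> left_nucleus L m"
proof -
  have aL: "a \<in> L" using a by (simp add: middle_nucleus_def)
  have "inv_of a \<cdot> (u \<cdot> w) = (inv_of a \<cdot> u) \<cdot> w" if u: "u \<in> L" and w: "w \<in> L" for u w
  proof -
    define v where "v = inv_of a \<cdot> (u \<cdot> w)"
    have vL: "v \<in> L" using v_def aL u w by simp
    have "(inv_of u \<cdot> a) \<cdot> v = inv_of u \<cdot> (a \<cdot> v)"
      using a u vL by (simp add: middle_nucleus_def)
    also have "\<dots> = w"
      using v_def left_inverse_property[of "u \<cdot> w" "inv_of a"] aL u w by simp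
    finally have "v = inv_of (inv_of u \<cdot> a) \<cdot> w"
      using left_inverse_property[of v "inv_of u \<cdot> a"] vL aL u by simp
    then show ?thesis
      using inv_of_mult[of "inv_of u" a] v_def aL u by simp
  qed
  with aL show ?thesis by (simp add: left_nucleus_def)
qed

lemma middle_nucleus_subset_left_nucleus: "middle_nucleus L m \<subseteq> left_nucleus L m"
proof
  fix a assume a: "a \<in> middle_nucleus L m"
  then have "a \<in> L" by (simp add: middle_nucleus_def)
  with inv_of_middle_nucleus_in_left_nucleus[OF middle_nucleus_inv_of[OF a]]
  show "a \<in> left_nucleus L m" by simp
qed

lemma middle_nucleus_subset_right_nucleus: "middle_nucleus L m \<subseteq> right_nucleus L m"
proof -
  interpret opposite: C_loop L "\<lambda>x y. y \<cdot> x" e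
    using is_C_loop_opposite[OF C_loop] by unfold_locales
  show ?thesis
    using opposite.middle_nucleus_subset_left_nucleus
    unfolding left_nucleus_opposite[of L m] middle_nucleus_opposite[of L m] .
qed

lemma nucleus_eq_middle_nucleus: "nucleus L m = middle_nucleus L m"
  unfolding nucleus_def
  using middle_nucleus_subset_left_nucleus middle_nucleus_subset_right_nucleus by blast

lemma nucleus_closed: "a \<in> nucleus L m \<Longrightarrow> a \<in> L"
  by (simp add: nucleus_def left_nucleus_def)

lemma nucleus_left_assoc: "\<lbrakk>a \<in> nucleus L m; u \<in> L; v \<in> L\<rbrakk> \<Longrightarrow> a \<cdot> (u \<cdot> v) = (a \<cdot> u) \<cdot> v"
  by (simp add: nucleus_def left_nucleus_def)

lemma nucleus_middle_assoc: "\<lbrakk>a \<in> nucleus L m; u \<in> L; v \<in> L\<rbrakk> \<Longrightarrow> u \<cdot> (a \<cdot> v) = (u \<cdot> a) \<cdot> v"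
  by (simp add: nucleus_def middle_nucleus_def)

lemma nucleus_right_assoc: "\<lbrakk>a \<in> nucleus L m; u \<in> L; v \<in> L\<rbrakk> \<Longrightarrow> u \<cdot> (v \<cdot> a) = (u \<cdot> v) \<cdot> a"
  by (simp add: nucleus_def right_nucleus_def)

lemma square_in_nucleus: "y \<in> L \<Longrightarrow> y \<cdot> y \<in> nucleus L m"
  using square_in_middle_nucleus nucleus_eq_middle_nucleus by simp

lemma nucleus_inv_of: "a \<in> nucleus L m \<Longrightarrow> inv_of a \<in> nucleus L m"
  using middle_nucleus_inv_of nucleus_eq_middle_nucleus by simp

lemma unit_in_nucleus: "e \<in> nucleus L m"
  using unit_closed by (simp add: nucleus_eq_middle_nucleus middle_nucleus_def)

lemma nucleus_mult_closed:
  assumes a: "a \<in> nucleus L m" and b: "b \<in> nucleus L m" shows "a \<cdot> b \<in> nucleus L m"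
proof -
  have L: "a \<in> L" "b \<in> L" using a b nucleus_closed by auto
  have "y \<cdot> ((a \<cdot> b) \<cdot> z) = (y \<cdot> (a \<cdot> b)) \<cdot> z" if "y \<in> L" "z \<in> L" for y z
  proof -
    have "y \<cdot> ((a \<cdot> b) \<cdot> z) = y \<cdot> (a \<cdot> (b \<cdot> z))" using nucleus_left_assoc[OF a] L that by simp
    also have "\<dots> = (y \<cdot> a) \<cdot> (b \<cdot> z)" using nucleus_middle_assoc[OF a] L that by simp
    also have "\<dots> = ((y \<cdot> a) \<cdot> b) \<cdot> z" using nucleus_middle_assoc[OF b] L that by simp
    also have "\<dots> = (y \<cdot> (a \<cdot> b)) \<cdot> z" using nucleus_right_assoc[OF b] L that by simp
    finally show ?thesis .
  qed
  with L show ?thesis by (simp add: nucleus_eq_middle_nucleus middle_nucleus_def)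
qed

lemma nucleus_is_subloop: "is_subloop (nucleus L m) L m e"
  unfolding is_subloop_def
proof (intro conjI ballI impI)
  show "nucleus L m \<subseteq> L" using nucleus_closed by blast
  show "e \<in> nucleus L m" by (rule unit_in_nucleus)
  show "a \<cdot> b \<in> nucleus L m" if "a \<in> nucleus L m" "b \<in> nucleus L m" for a b
    using nucleus_mult_closed that .
  show "x \<in> nucleus L m" if "a \<in> nucleus L m" "b \<in> nucleus L m" "x \<in> L" "a \<cdot> x = b" for a b x
  proof -
    have "x = inv_of a \<cdot> b" using that left_inverse_property[of x a] nucleus_closed by metis
    then show ?thesis using nucleus_mult_closed nucleus_inv_of that by simp
  qed
  show "y \<in> nucleus L m" if "a \<in> nucleus L m" "b \<in> nucleus L m" "y \<in> L" "y \<cdot> a = b" for a b y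
  proof -
    have "y = b \<cdot> inv_of a" using that right_inverse_property[of y a] nucleus_closed by metis
    then show ?thesis using nucleus_mult_closed nucleus_inv_of that by simp
  qed
qed

lemma nucleus_left_coset_subset_right_coset:
  assumes x: "x \<in> L" and k: "k \<in> nucleus L m"
  shows "\<exists>k'\<in>nucleus L m. x \<cdot> k = k' \<cdot> x"
proof -
  have kL: "k \<in> L" using k nucleus_closed by blast
  define w where "w = inv_of k \<cdot> x"
  have wL: "w \<in> L" using w_def x kL by simp
  define p where "p = x \<cdot> x"
  define q where "q = inv_of (w \<cdot> w)"
  have pN: "p \<in> nucleus L m" using square_in_nucleus x p_def by simp
  have qN: "q \<in> nucleus L m" using q_def nucleus_inv_of square_in_nucleus wL by simp
  have "x \<cdot> k = (p \<cdot> inv_of x) \<cdot> k" using p_def x by simp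
  also have "\<dots> = p \<cdot> (inv_of x \<cdot> k)" using nucleus_left_assoc[OF pN] x kL by simp
  also have "inv_of x \<cdot> k = inv_of w" using inv_of_mult[of "inv_of k" x] w_def kL x by simp
  also have "inv_of w = q \<cdot> (inv_of k \<cdot> x)" using inv_of_square[OF wL] q_def w_def by simp
  also have "\<dots> = (q \<cdot> inv_of k) \<cdot> x" using nucleus_left_assoc[OF qN] x kL by simp
  also have "p \<cdot> \<dots> = (p \<cdot> (q \<cdot> inv_of k)) \<cdot> x"
    using nucleus_left_assoc[OF pN] x kL qN nucleus_closed by simp
  finally show ?thesis
    using nucleus_mult_closed nucleus_inv_of pN qN k by blast
qed

lemma nucleus_right_coset_subset_left_coset:
  assumes "x \<in> L" and "k \<in> nucleus L m"
  shows "\<exists>k'\<in>nucleus L m. k \<cdot> x = x \<cdot> k'"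
proof -
  interpret opposite: C_loop L "\<lambda>x y. y \<cdot> x" e
    using is_C_loop_opposite[OF C_loop] by unfold_locales
  show ?thesis
    using opposite.nucleus_left_coset_subset_right_coset assms
    unfolding nucleus_opposite[of L m] by simp
qed

lemma nucleus_left_coset_eq_right_coset:
  "x \<in> L \<Longrightarrow> (\<lambda>k. x \<cdot> k) ` nucleus L m = (\<lambda>k. k \<cdot> x) ` nucleus L m"
  using nucleus_left_coset_subset_right_coset nucleus_right_coset_subset_left_coset
  by (auto simp: image_iff)

lemma nucleus_left_coset_mult:
  assumes x: "x \<in> L" and y: "y \<in> L"
  shows "(\<lambda>k. x \<cdot> (y \<cdot> k)) ` nucleus L m = (\<lambda>k. (x \<cdot> y) \<cdot> k) ` nucleus L m"
proof -
  let ?N = "nucleus L m"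
  have "(\<lambda>k. x \<cdot> (y \<cdot> k)) ` ?N = (\<lambda>u. x \<cdot> u) ` (\<lambda>k. y \<cdot> k) ` ?N"
    by (simp add: image_image)
  also have "\<dots> = (\<lambda>u. x \<cdot> u) ` (\<lambda>k. k \<cdot> y) ` ?N"
    using nucleus_left_coset_eq_right_coset[OF y] by simp
  also have "\<dots> = (\<lambda>k. (x \<cdot> k) \<cdot> y) ` ?N"
    using nucleus_middle_assoc x y by (simp add: image_image)
  also have "\<dots> = (\<lambda>u. u \<cdot> y) ` (\<lambda>k. x \<cdot> k) ` ?N"
    by (simp add: image_image)
  also have "\<dots> = (\<lambda>u. u \<cdot> y) ` (\<lambda>k. k \<cdot> x) ` ?N"
    using nucleus_left_coset_eq_right_coset[OF x] by simp
  also have "\<dots> = (\<lambda>k. k \<cdot> (x \<cdot> y)) ` ?N"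
    using nucleus_left_assoc x y by (simp add: image_image)
  also have "\<dots> = (\<lambda>k. (x \<cdot> y) \<cdot> k) ` ?N"
    using nucleus_left_coset_eq_right_coset x y by simp
  finally show ?thesis .
qed

lemma nucleus_is_normal_subloop: "is_normal_subloop (nucleus L m) L m e"
  unfolding is_normal_subloop_def
  using nucleus_is_subloop nucleus_left_coset_eq_right_coset nucleus_left_coset_mult
    nucleus_middle_assoc
  by (auto intro!: image_cong)

end

theorem proposition2p5:
  fixes L :: "'a set" and m :: "'a \<Rightarrow> 'a \<Rightarrow> 'a" and e :: 'a
  assumes "is_C_loop L m e"
  shows "is_normal_subloop (nucleus L m) L m e \<and>
         (\<forall>a\<in>nucleus L m. \<forall>b\<in>nucleus L m. \<forall>c\<in>nucleus L m. m a (m b c) = m (m a b) c)"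
proof -
  interpret C_loop L m e using assms by unfold_locales
  show ?thesis
    using nucleus_is_normal_subloop nucleus_left_assoc nucleus_closed by blast
qed

end
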